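(* Let $\tilde f>0$, $\tilde\vartheta>0$ satisfy $\tilde f/\tilde\vartheta>D/V$, and define $\tilde\sigma(\mathbf{x})=\mathbb{I}(\rho(\mathbf{x})>0)\,\tilde f+\frac{\tilde f}{\xi\tilde\vartheta}\theta(\mathbf{x})$ and $\tilde\pi(\mathbf{x})=-(f(\mathbf{x})+\tilde\sigma(\mathbf{x}))$. For all $\mathbf{x}_1,\mathbf{x}_2\in S$, with $y=f(\mathbf{x}_1)-f(\mathbf{x}_2)$ and $z=\theta(\mathbf{x}_1)-\theta(\mathbf{x}_2)$: (i) if one of (A1)–(A4) holds, then $\tilde\pi(\mathbf{x}_1)>\tilde\pi(\mathbf{x}_2)$; (ii) if one of (B1)–(B4) holds, then $\tilde\pi(\mathbf{x}_1)<\tilde\pi(\mathbf{x}_2)$. Here (A1) $-2V\le z<-V$; (A2) $-V\le z<-\xi V$; (A3) $-\xi V\le z<-\xi\eta V$ and $-D\le y\le\eta D$; (A4) $-\xi\eta V\le z\le0$, $-D\le y\le0$, $(y,z)\ne(0,0)$; (B1) $V<z\le2V$; (B2) $\xi V<z\le V$; (B3) $\xi\eta V<z\le\xi V$ and $-\eta D\le y\le D$; (B4) $0\le z\le\xi\eta V$, $0\le y\le D$, $(y,z)\ne(0,0)$.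
   Context: Let $S\subset\mathbb{R}^k$ be a compact box, $f,g_1,\dots,g_m,h_{m+1},\dots,h_n:S\to\mathbb{R}$ continuous, $\delta>0$. Put $v_i(\mathbf{x})=\max\{g_i(\mathbf{x}),0\}$ ($i\le m$), $v_i(\mathbf{x})=\max\{|h_i(\mathbf{x})|-\delta,0\}$ ($m<i\le n$), $\vartheta(\mathbf{x})=\sum_{i=1}^n v_i(\mathbf{x})$; $\mathbf{x}$ is feasible iff $\vartheta(\mathbf{x})=0$. Let $D=\max_S f-\min_S f$ and $V=\max_S\vartheta$, and assume $D>0$, $V>0$. Define $\theta(\mathbf{x})=-V$ if $\vartheta(\mathbf{x})=0$ and $\theta(\mathbf{x})=\vartheta(\mathbf{x})$ otherwise. Let $\rho(\mathbf{x})=\#\{i: v_i(\mathbf{x})>0\}$ and $\mathbb{I}(\rho(\mathbf{x})>0)$ be $1$ if $\rho(\mathbf{x})>0$ and $0$ otherwise. Fix parameters $0<\eta<1$ and $0<\xi\le 1$. *)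

theory Defs
  imports "HOL-Analysis.Analysis"
begin

text \<open>Constraint violations: indices 1..m are inequality constraints g i \<le> 0,
  indices m+1..n are equality constraints h i = 0 relaxed to |h i| \<le> delta.\<close>
definition viol :: "(nat \<Rightarrow> 'a \<Rightarrow> real) \<Rightarrow> (nat \<Rightarrow> 'a \<Rightarrow> real) \<Rightarrow> real \<Rightarrow> nat \<Rightarrow> nat \<Rightarrow> 'a \<Rightarrow> real" where
  "viol g h \<delta> m i x = (if i \<le> m then max (g i x) 0 else max (\<bar>h i x\<bar> - \<delta>) 0)"

definition tviol :: "(nat \<Rightarrow> 'a \<Rightarrow> real) \<Rightarrow> (nat \<Rightarrow> 'a \<Rightarrow> real) \<Rightarrow> real \<Rightarrow> nat \<Rightarrow> nat \<Rightarrow> 'a \<Rightarrow> real" where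
  "tviol g h \<delta> m n x = (\<Sum>i\<in>{1..n}. viol g h \<delta> m i x)"

definition nviol :: "(nat \<Rightarrow> 'a \<Rightarrow> real) \<Rightarrow> (nat \<Rightarrow> 'a \<Rightarrow> real) \<Rightarrow> real \<Rightarrow> nat \<Rightarrow> nat \<Rightarrow> 'a \<Rightarrow> nat" where
  "nviol g h \<delta> m n x = card {i\<in>{1..n}. viol g h \<delta> m i x > 0}"

definition theta_fun :: "(nat \<Rightarrow> 'a \<Rightarrow> real) \<Rightarrow> (nat \<Rightarrow> 'a \<Rightarrow> real) \<Rightarrow> real \<Rightarrow> nat \<Rightarrow> nat \<Rightarrow> real \<Rightarrow> 'a \<Rightarrow> real" where
  "theta_fun g h \<delta> m n V x = (if tviol g h \<delta> m n x = 0 then - V else tviol g h \<delta> m n x)"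

definition sigma_t :: "(nat \<Rightarrow> 'a \<Rightarrow> real) \<Rightarrow> (nat \<Rightarrow> 'a \<Rightarrow> real) \<Rightarrow> real \<Rightarrow> nat \<Rightarrow> nat \<Rightarrow> real
     \<Rightarrow> real \<Rightarrow> real \<Rightarrow> real \<Rightarrow> 'a \<Rightarrow> real" where
  "sigma_t g h \<delta> m n V \<xi> ft vt x =
     (if nviol g h \<delta> m n x > 0 then 1 else 0) * ft + ft / (\<xi> * vt) * theta_fun g h \<delta> m n V x"

definition pi_t :: "('a \<Rightarrow> real) \<Rightarrow> (nat \<Rightarrow> 'a \<Rightarrow> real) \<Rightarrow> (nat \<Rightarrow> 'a \<Rightarrow> real) \<Rightarrow> real \<Rightarrow> nat \<Rightarrow> nat \<Rightarrow> real
     \<Rightarrow> real \<Rightarrow> real \<Rightarrow> real \<Rightarrow> 'a \<Rightarrow> real" where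
  "pi_t f g h \<delta> m n V \<xi> ft vt x = - (f x + sigma_t g h \<delta> m n V \<xi> ft vt x)"

end

theory Submission
  imports Defs
begin

text \<open>Write \<open>c = ft / (\<xi> vt)\<close>, \<open>y = f x1 - f x2\<close> and \<open>z = \<theta> x1 - \<theta> x2\<close>. As \<open>\<theta>\<close>
  equals \<open>-V < 0\<close> at feasible points and the positive total violation elsewhere,
  \<open>\<rho> x > 0\<close> iff \<open>\<theta> x > 0\<close>, so \<open>\<pi> x2 - \<pi> x1 = y + c z + ft ([\<theta> x1 > 0] - [\<theta> x2 > 0])\<close>.
  Each of (A1)-(A4) forces \<open>z \<le> 0\<close>, hence \<open>\<theta> x1 > 0 \<Longrightarrow> \<theta> x2 > 0\<close>, and \<open>y + c z < 0\<close>: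
  in (A1)-(A3) because \<open>c \<xi> V > D \<ge> \<bar>y\<bar>\<close> (this is \<open>ft/vt > D/V\<close>), in (A4) because both
  summands are nonpositive and not both zero. (B1)-(B4) are (A1)-(A4) for \<open>(-y, -z)\<close>,
  i.e. with the two points exchanged.\<close>

definition improvement_region :: "real \<Rightarrow> real \<Rightarrow> real \<Rightarrow> real \<Rightarrow> real \<Rightarrow> real \<Rightarrow> bool" where
  "improvement_region D V \<xi> \<eta> y z \<longleftrightarrow>
     (-2*V \<le> z \<and> z < -V)
     \<or> (-V \<le> z \<and> z < -\<xi>*V)
     \<or> (-\<xi>*V \<le> z \<and> z < -\<xi>*\<eta>*V \<and> -D \<le> y \<and> y \<le> \<eta>*D)
     \<or> (-\<xi>*\<eta>*V \<le> z \<and> z \<le> 0 \<and> -D \<le> y \<and> y \<le> 0 \<and> (y, z) \<noteq> (0, 0))"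

lemma improvement_region_uminus:
  "improvement_region D V \<xi> \<eta> (-y) (-z) \<longleftrightarrow>
     (V < z \<and> z \<le> 2*V)
     \<or> (\<xi>*V < z \<and> z \<le> V)
     \<or> (\<xi>*\<eta>*V < z \<and> z \<le> \<xi>*V \<and> -\<eta>*D \<le> y \<and> y \<le> D)
     \<or> (0 \<le> z \<and> z \<le> \<xi>*\<eta>*V \<and> 0 \<le> y \<and> y \<le> D \<and> (y, z) \<noteq> (0, 0))"
  unfolding improvement_region_def by auto

lemma improvement_region_imp:
  fixes c :: real
  assumes "0 < c" "0 < V" "0 < \<xi>" "\<xi> \<le> 1" "0 < \<eta>"
    and "D < c*\<xi>*V" and "y \<le> D"
    and "improvement_region D V \<xi> \<eta> y z"
  shows "z \<le> 0" and "y + c*z < 0"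
proof -
  have "\<xi>*V \<le> V" "0 < \<xi>*V" "0 < \<xi>*\<eta>*V"
    using assms(2-5) by (simp_all add: mult_le_cancel_right1)
  with assms(8) consider "z < -(\<xi>*V)" | "z < -(\<xi>*\<eta>*V)" "y \<le> \<eta>*D"
    | "z \<le> 0" "y \<le> 0" "(y, z) \<noteq> (0, 0)"
    unfolding improvement_region_def by auto
  then have "z \<le> 0 \<and> y + c*z < 0"
  proof cases
    case 1
    moreover from 1 have "c*z < -(c*\<xi>*V)"
      using mult_strict_left_mono[OF _ \<open>0 < c\<close>] by fastforce
    ultimately show ?thesis
      using \<open>0 < \<xi>*V\<close> assms(6,7) by linarith
  next
    case 2
    moreover from 2 have "c*z < -\<eta>*(c*\<xi>*V)"
      using mult_strict_left_mono[OF _ \<open>0 < c\<close>] by (fastforce simp: ac_simps)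
    moreover have "\<eta>*D < \<eta>*(c*\<xi>*V)"
      using assms(5,6) by simp
    ultimately show ?thesis
      using \<open>0 < \<xi>*\<eta>*V\<close> by linarith
  next
    case 3
    moreover from 3 have "c*z \<le> 0" "z < 0 \<Longrightarrow> c*z < 0"
      using \<open>0 < c\<close> by (simp_all add: mult_nonneg_nonpos mult_pos_neg)
    ultimately show ?thesis
      by force
  qed
  then show "z \<le> 0" and "y + c*z < 0"
    by auto
qed

lemma viol_nonneg: "0 \<le> viol g h \<delta> m i x"
  unfolding viol_def by simp

lemma tviol_nonneg: "0 \<le> tviol g h \<delta> m n x"
  unfolding tviol_def by (intro sum_nonneg viol_nonneg)

lemma nviol_pos_iff_tviol_pos: "0 < nviol g h \<delta> m n x \<longleftrightarrow> 0 < tviol g h \<delta> m n x"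
proof -
  have "0 < nviol g h \<delta> m n x \<longleftrightarrow> (\<exists>i\<in>{1..n}. 0 < viol g h \<delta> m i x)"
    unfolding nviol_def by (subst card_gt_0_iff) auto
  also have "\<dots> \<longleftrightarrow> \<not> (\<forall>i\<in>{1..n}. viol g h \<delta> m i x = 0)"
    using viol_nonneg[of g h \<delta> m _ x] by (auto simp: less_le)
  also have "\<dots> \<longleftrightarrow> tviol g h \<delta> m n x \<noteq> 0"
    unfolding tviol_def by (simp add: sum_nonneg_eq_0_iff[OF finite_atLeastAtMost viol_nonneg])
  also have "\<dots> \<longleftrightarrow> 0 < tviol g h \<delta> m n x"
    using tviol_nonneg[of g h \<delta> m n x] by (auto simp: less_le)
  finally show ?thesis .
qed

lemma theta_fun_pos_iff:
  "0 < V \<Longrightarrow> 0 < theta_fun g h \<delta> m n V x \<longleftrightarrow> 0 < tviol g h \<delta> m n x"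
  unfolding theta_fun_def using tviol_nonneg[of g h \<delta> m n x] by auto

lemma theta_fun_nonpos_eq:
  "theta_fun g h \<delta> m n V x \<le> 0 \<Longrightarrow> theta_fun g h \<delta> m n V x = -V"
  unfolding theta_fun_def using tviol_nonneg[of g h \<delta> m n x] by auto

lemma pi_t_eq:
  assumes "0 < V"
  shows "pi_t f g h \<delta> m n V \<xi> ft vt x =
    -(f x + (if 0 < theta_fun g h \<delta> m n V x then ft else 0) + ft/(\<xi> * vt) * theta_fun g h \<delta> m n V x)"
  unfolding pi_t_def sigma_t_def
  by (simp add: theta_fun_pos_iff[OF assms] nviol_pos_iff_tviol_pos)

lemma pi_t_less_if_improvement_region:
  assumes "0 < V" "0 < \<xi>" "\<xi> \<le> 1" "0 < \<eta>" "0 < ft" "0 < vt" "D / V < ft / vt"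
    and "f x1 - f x2 \<le> D"
    and region: "improvement_region D V \<xi> \<eta> (f x1 - f x2)
                   (theta_fun g h \<delta> m n V x1 - theta_fun g h \<delta> m n V x2)"
  shows "pi_t f g h \<delta> m n V \<xi> ft vt x2 < pi_t f g h \<delta> m n V \<xi> ft vt x1"
proof -
  define \<theta> where "\<theta> = theta_fun g h \<delta> m n V"
  define c where "c = ft / (\<xi> * vt)"
  have "0 < c"
    unfolding c_def using assms(2,5,6) by simp
  have "D < ft / vt * V"
    using assms(1,7) by (simp add: pos_divide_less_eq)
  then have "D < c*\<xi>*V"
    unfolding c_def using assms(2,6) by (simp add: field_simps)
  note linear = improvement_region_imp[OF \<open>0 < c\<close> assms(1-4) this assms(8) region[folded \<theta>_def]]
  have indicator: "0 < \<theta> x1 \<Longrightarrow> 0 < \<theta> x2"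
    using linear(1) theta_fun_nonpos_eq[of g h \<delta> m n V x2] assms(1)
    unfolding \<theta>_def by force
  show ?thesis
    unfolding pi_t_eq[OF assms(1)] \<theta>_def[symmetric] c_def[symmetric]
    using linear(2) indicator assms(5) by (auto simp: algebra_simps)
qed

lemma abs_diff_le_Sup_minus_Inf:
  fixes f :: "'a::topological_space \<Rightarrow> real"
  assumes "compact S" "continuous_on S f" "x1 \<in> S" "x2 \<in> S"
  shows "\<bar>f x1 - f x2\<bar> \<le> Sup (f ` S) - Inf (f ` S)"
proof -
  have "bounded (f ` S)"
    using assms(1,2) by (intro compact_imp_bounded compact_continuous_image)
  then have "f x1 \<le> Sup (f ` S)" "f x2 \<le> Sup (f ` S)" "Inf (f ` S) \<le> f x1" "Inf (f ` S) \<le> f x2"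
    using assms(3,4) by (auto intro!: cSup_upper cInf_lower bounded_imp_bdd_above bounded_imp_bdd_below)
  then show ?thesis
    by linarith
qed

theorem mainTheorem8:
  fixes a b :: "'a::euclidean_space"
    and f :: "'a \<Rightarrow> real" and g h :: "nat \<Rightarrow> 'a \<Rightarrow> real"
    and m n :: nat and \<delta> \<eta> \<xi> ft vt :: real
  defines "S \<equiv> cbox a b"
  defines "D \<equiv> Sup (f ` S) - Inf (f ` S)"
  defines "V \<equiv> Sup (tviol g h \<delta> m n ` S)"
  assumes "m \<le> n"
    and "continuous_on S f"
    and "\<forall>i\<in>{1..m}. continuous_on S (g i)"
    and "\<forall>i\<in>{m+1..n}. continuous_on S (h i)"
    and "\<delta> > 0" and "D > 0" and "V > 0"
    and "0 < \<eta>" and "\<eta> < 1" and "0 < \<xi>" and "\<xi> \<le> 1"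
    and "ft > 0" and "vt > 0" and "ft / vt > D / V"
  shows "\<forall>x1\<in>S. \<forall>x2\<in>S.
    (let y = f x1 - f x2;
         z = theta_fun g h \<delta> m n V x1 - theta_fun g h \<delta> m n V x2;
         \<pi> = pi_t f g h \<delta> m n V \<xi> ft vt
     in ((-2*V \<le> z \<and> z < -V)
         \<or> (-V \<le> z \<and> z < -\<xi>*V)
         \<or> (-\<xi>*V \<le> z \<and> z < -\<xi>*\<eta>*V \<and> -D \<le> y \<and> y \<le> \<eta>*D)
         \<or> (-\<xi>*\<eta>*V \<le> z \<and> z \<le> 0 \<and> -D \<le> y \<and> y \<le> 0 \<and> (y, z) \<noteq> (0, 0))
         \<longrightarrow> \<pi> x1 > \<pi> x2)
      \<and> ((V < z \<and> z \<le> 2*V)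
         \<or> (\<xi>*V < z \<and> z \<le> V)
         \<or> (\<xi>*\<eta>*V < z \<and> z \<le> \<xi>*V \<and> -\<eta>*D \<le> y \<and> y \<le> D)
         \<or> (0 \<le> z \<and> z \<le> \<xi>*\<eta>*V \<and> 0 \<le> y \<and> y \<le> D \<and> (y, z) \<noteq> (0, 0))
         \<longrightarrow> \<pi> x1 < \<pi> x2))"
proof -
  have f_diff: "\<bar>f x1 - f x2\<bar> \<le> D" if "x1 \<in> S" "x2 \<in> S" for x1 x2
    unfolding D_def using abs_diff_le_Sup_minus_Inf[of S f] \<open>continuous_on S f\<close> that by (simp add: S_def)
  have "pi_t f g h \<delta> m n V \<xi> ft vt x2 < pi_t f g h \<delta> m n V \<xi> ft vt x1"
    if "x1 \<in> S" "x2 \<in> S"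
      and "improvement_region D V \<xi> \<eta> (f x1 - f x2)
             (theta_fun g h \<delta> m n V x1 - theta_fun g h \<delta> m n V x2)" for x1 x2
    using pi_t_less_if_improvement_region[of V \<xi> \<eta> ft vt D f x1 x2] f_diff[OF that(1,2)] that(3)
      \<open>V > 0\<close> \<open>0 < \<eta>\<close> \<open>0 < \<xi>\<close> \<open>\<xi> \<le> 1\<close> \<open>ft > 0\<close> \<open>vt > 0\<close> \<open>ft / vt > D / V\<close>
    by (simp add: abs_le_iff)
  then show ?thesis
    unfolding Let_def improvement_region_def[symmetric] improvement_region_uminus[symmetric]
    by (simp add: minus_diff_eq)
qed

end
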